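(* Let $p$ be a prime, $n\ge 1$, and let $A_r$ and $A_s$ be symmetric $n\times n$ matrices with entries in $\mathbb{Z}_p$. If $\det(A_r-A_s)\neq 0 \pmod p$, then the graph-state bases $\mathcal{B}_{A_r}$ and $\mathcal{B}_{A_s}$ of $(\mathbb{C}^p)^{\otimes n}$ are mutually unbiased, i.e. $|\langle G_{A_r}(m_1,\dots,m_n)|G_{A_s}(m'_1,\dots,m'_n)\rangle|^2 = 1/p^n$ for all $m_i,m'_i\in\mathbb{Z}_p$.
   Context: Let $\omega_p=e^{2\pi i/p}$. On $\mathbb{C}^p$ with computational basis $\{|0\rangle,\dots,|p-1\rangle\}$ let $|+\rangle=p^{-1/2}\sum_{k=0}^{p-1}|k\rangle$ and $Z=\sum_k \omega_p^k|k\rangle\langle k|$. On $(\mathbb{C}^p)^{\otimes n}$ define the one-qupit phase gates $U_{i,i}=\sum_{k=0}^{1} i^k|k\rangle\langle k|_i$ if $p=2$ (here $i=\sqrt{-1}$ in the phase) and $U_{i,i}=\sum_{k=0}^{p-1}\omega_p^{k(k-1)/2}|k\rangle\langle k|_i$ if $p\ge 3$, and for $i\neq j$ the controlled-phase gates $U_{i,j}=\sum_{k,l=0}^{p-1}\omega_p^{kl}|k\rangle\langle k|_i\otimes|l\rangle\langle l|_j$ (subscripts indicate the tensor factor acted upon). For a symmetric $n\times n$ matrix $A$ over $\mathbb{Z}_p$ (entries viewed as integers in $\{0,\dots,p-1\}$), the generalized graph state is $|G_A\rangle=\prod_{i\le j}U_{i,j}^{A_{i,j}}|+\rangle^{\otimes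 n}$, and the graph-state basis is $\mathcal{B}_A=\{|G_A(m_1,\dots,m_n)\rangle\}_{m_i\in\mathbb{Z}_p}$ with $|G_A(m_1,\dots,m_n)\rangle=Z^{m_1}\otimes\cdots\otimes Z^{m_n}|G_A\rangle$. Two orthonormal bases of $\mathbb{C}^d$ are mutually unbiased if every element of one has squared overlap $1/d$ with every element of the other. *)

theory Defs
  imports Complex_Main "HOL-Library.FuncSet" "Jordan_Normal_Form.Determinant"
begin

text \<open>Computational basis of (C^p)^(tensor n): strings k with k i in {0..p-1} for i < n,
  encoded as extensional functions. A state is a function from such strings to complex amplitudes.\<close>

definition omega :: "nat \<Rightarrow> complex" where
  "omega p = cis (2 * pi / real p)"

definition basis_set :: "nat \<Rightarrow> nat \<Rightarrow> (nat \<Rightarrow> nat) set" where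
  "basis_set n p = PiE {..<n} (\<lambda>_. {..<p})"

definition plus_state :: "nat \<Rightarrow> nat \<Rightarrow> (nat \<Rightarrow> nat) \<Rightarrow> complex" where
  "plus_state n p k = (if k \<in> basis_set n p then 1 / complex_of_real (sqrt (real p)) ^ n else 0)"

definition apply_diag :: "((nat \<Rightarrow> nat) \<Rightarrow> complex) \<Rightarrow> ((nat \<Rightarrow> nat) \<Rightarrow> complex) \<Rightarrow> (nat \<Rightarrow> nat) \<Rightarrow> complex" where
  "apply_diag d \<psi> = (\<lambda>k. d k * \<psi> k)"

definition phase_gate :: "nat \<Rightarrow> nat \<Rightarrow> complex" where
  "phase_gate p x = (if p = 2 then \<i> ^ x else omega p ^ (x * (x - 1) div 2))"

definition U_gate :: "nat \<Rightarrow> nat \<Rightarrow> nat \<Rightarrow> (nat \<Rightarrow> nat) \<Rightarrow> complex" where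
  "U_gate p i j k = (if i = j then phase_gate p (k i) else omega p ^ (k i * k j))"

definition graph_state :: "nat \<Rightarrow> nat \<Rightarrow> int mat \<Rightarrow> (nat \<Rightarrow> nat) \<Rightarrow> complex" where
  "graph_state n p A = apply_diag
     (\<lambda>k. \<Prod>i<n. \<Prod>j\<in>{i..<n}. U_gate p i j k ^ nat (A $$ (i, j))) (plus_state n p)"

definition Z_string :: "nat \<Rightarrow> nat \<Rightarrow> (nat \<Rightarrow> nat) \<Rightarrow> (nat \<Rightarrow> nat) \<Rightarrow> complex" where
  "Z_string n p m k = (\<Prod>i<n. omega p ^ (m i * k i))"

definition graph_basis_state :: "nat \<Rightarrow> nat \<Rightarrow> int mat \<Rightarrow> (nat \<Rightarrow> nat) \<Rightarrow> (nat \<Rightarrow> nat) \<Rightarrow> complex" where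
  "graph_basis_state n p A m = apply_diag (Z_string n p m) (graph_state n p A)"

definition inner_prod :: "nat \<Rightarrow> nat \<Rightarrow> ((nat \<Rightarrow> nat) \<Rightarrow> complex) \<Rightarrow> ((nat \<Rightarrow> nat) \<Rightarrow> complex) \<Rightarrow> complex" where
  "inner_prod n p \<phi> \<psi> = (\<Sum>k\<in>basis_set n p. cnj (\<phi> k) * \<psi> k)"

end

theory Submission
  imports Defs "HOL-Number_Theory.Cong"
begin

text \<open>Both graph-basis states are diagonal phases applied to the uniform superposition, so
  p^n times their overlap is a sum of a unimodular function g over (Z_p)^n. The graph phases are
  quadratic in k, hence g (k + h) = g k * g h * \<omega>^(- k^T M h) with M = A_r - A_s. As for a
  quadratic Gauss sum, substituting k' = k + h in |\<Sum>k. g k|^2 leaves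
  \<Sum>h. g h * (\<Sum>k. \<omega>^(- k^T M h)); the inner character sum vanishes unless M h = 0 mod p,
  which forces h = 0 because det M is a unit mod p. Hence |\<Sum>k. g k|^2 = p^n and the squared
  overlap is 1/p^n.\<close>

lemma omega_powi: "omega p powi a = cis (2 * pi * of_int a / real p)"
  unfolding omega_def cis_power_int by (simp add: field_simps)

lemma omega_nonzero: "omega p \<noteq> 0"
  unfolding omega_def by simp

lemma norm_omega [simp]: "cmod (omega p) = 1"
  unfolding omega_def by simp

lemma cnj_omega_powi: "cnj (omega p powi a) = omega p powi (- a)"
  unfolding omega_powi cis_cnj by simp

lemma omega_powi_add: "omega p powi (a + b) = omega p powi a * omega p powi b"
  by (simp add: power_int_add omega_nonzero)

lemma omega_two: "omega 2 = -1"
  unfolding omega_def by simp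

lemma omega_powi_eq_1_iff:
  assumes "p > 0"
  shows "omega p powi a = 1 \<longleftrightarrow> int p dvd a"
proof
  assume "omega p powi a = 1"
  hence "cos (2 * pi * of_int a / real p) = 1"
    unfolding omega_powi by (metis cis.sel(1) one_complex.sel(1))
  then obtain m :: int where "2 * pi * of_int a / real p = of_int m * 2 * pi"
    using cos_one_2pi_int by blast
  hence "of_int a = (of_int (m * int p) :: real)"
    using assms by (simp add: field_simps)
  thus "int p dvd a" by (simp only: of_int_eq_iff) simp
next
  assume "int p dvd a"
  then obtain m where "a = int p * m" by blast
  hence "2 * pi * of_int a / real p = 2 * pi * of_int m"
    using assms by simp
  thus "omega p powi a = 1"
    unfolding omega_powi by simp
qed

lemma omega_powi_cong:
  assumes "p > 0" and "[a = b] (mod int p)"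
  shows "omega p powi a = omega p powi b"
proof -
  have "omega p powi (a - b) = 1"
    using assms by (simp add: omega_powi_eq_1_iff cong_iff_dvd_diff)
  thus ?thesis using omega_powi_add[of p "a - b" b] by simp
qed

lemma omega_power_cong:
  assumes "p > 0" and "[a = b] (mod p)"
  shows "omega p ^ a = omega p ^ b"
  using omega_powi_cong[of p "int a" "int b"] assms by (simp add: cong_int_iff)

lemma sum_omega_powi_mult:
  assumes "p > 0"
  shows "(\<Sum>x<p. omega p powi (int x * c)) = (if int p dvd c then of_nat p else 0)"
proof -
  have sum_eq: "(\<Sum>x<p. omega p powi (int x * c)) = (\<Sum>x<p. (omega p powi c) ^ x)"
    by (simp add: power_int_mult mult.commute)
  show ?thesis
  proof (cases "int p dvd c")
    case True
    hence "omega p powi c = 1" using assms by (simp add: omega_powi_eq_1_iff)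
    thus ?thesis using True sum_eq by simp
  next
    case False
    have "(omega p powi c) ^ p = 1"
      using assms by (simp add: power_int_power' omega_powi_eq_1_iff)
    moreover have "omega p powi c \<noteq> 1"
      using False assms by (simp add: omega_powi_eq_1_iff)
    ultimately show ?thesis using False sum_eq by (simp add: sum_gp_strict)
  qed
qed

lemma double_triangle_add: "2 * (z * (z - 1) div 2) + z = z * z" for z :: nat
proof (cases z)
  case (Suc w)
  have "even (Suc w * w)" by simp
  hence "2 * (Suc w * w div 2) = Suc w * w" by simp
  thus ?thesis using Suc by simp
qed simp

lemma triangle_add_cong:
  fixes p x y :: nat
  assumes "odd p"
  shows "[(x + y) mod p * ((x + y) mod p - 1) div 2
          = x * (x - 1) div 2 + y * (y - 1) div 2 + x * y] (mod p)"
proof -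
  define z where "z = (x + y) mod p"
  have z: "[z = x + y] (mod p)" unfolding z_def by (simp add: cong_def)
  have "[2 * (z * (z - 1) div 2) + z = (x + y) * (x + y)] (mod p)"
    unfolding double_triangle_add using z by (intro cong_mult)
  also have "(x + y) * (x + y) = (2 * (x * (x - 1) div 2) + x) + (2 * (y * (y - 1) div 2) + y) + 2 * (x * y)"
    unfolding double_triangle_add by (simp add: algebra_simps)
  also have "\<dots> = 2 * (x * (x - 1) div 2 + y * (y - 1) div 2 + x * y) + (x + y)"
    by simp
  also have "[\<dots> = 2 * (x * (x - 1) div 2 + y * (y - 1) div 2 + x * y) + z] (mod p)"
    using z by (intro cong_add cong_refl) (rule cong_sym)
  finally have "[2 * (z * (z - 1) div 2) = 2 * (x * (x - 1) div 2 + y * (y - 1) div 2 + x * y)] (mod p)"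
    by (simp only: cong_add_rcancel_nat)
  moreover have "coprime 2 p" using assms by simp
  ultimately have "[z * (z - 1) div 2 = x * (x - 1) div 2 + y * (y - 1) div 2 + x * y] (mod p)"
    by (simp only: cong_mult_lcancel_nat)
  thus ?thesis unfolding z_def .
qed

lemma phase_gate_add_mod:
  assumes p: "prime p" and "x < p" and "y < p"
  shows "phase_gate p ((x + y) mod p) = phase_gate p x * phase_gate p y * omega p ^ (x * y)"
proof (cases "p = 2")
  case True
  have phase_gate_2: "phase_gate 2 z = \<i> ^ z" for z
    by (simp add: phase_gate_def)
  have "x = 0 \<or> x = 1" "y = 0 \<or> y = 1" using assms(2,3) True by auto
  hence "\<i> ^ ((x + y) mod 2) = \<i> ^ x * \<i> ^ y * (-1::complex) ^ (x * y)"
    by (elim disjE) simp_all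
  thus ?thesis unfolding True phase_gate_2 omega_two .
next
  case False
  hence "odd p" using prime_ge_2_nat[OF p] by (intro prime_odd_nat[OF p]) simp
  hence "omega p ^ ((x + y) mod p * ((x + y) mod p - 1) div 2) =
         omega p ^ (x * (x - 1) div 2 + y * (y - 1) div 2 + x * y)"
    using p by (intro omega_power_cong triangle_add_cong) (auto simp: prime_gt_0_nat)
  thus ?thesis using False by (simp add: phase_gate_def power_add)
qed

lemma finite_basis_set: "finite (basis_set n p)"
  unfolding basis_set_def by (intro finite_PiE) auto

definition basis_zero :: "nat \<Rightarrow> (nat \<Rightarrow> nat)" where
  "basis_zero n = restrict (\<lambda>_. 0) {..<n}"

lemma basis_zero_in_basis_set: "p > 0 \<Longrightarrow> basis_zero n \<in> basis_set n p"
  unfolding basis_zero_def basis_set_def by auto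

definition basis_add :: "nat \<Rightarrow> nat \<Rightarrow> (nat \<Rightarrow> nat) \<Rightarrow> (nat \<Rightarrow> nat) \<Rightarrow> (nat \<Rightarrow> nat)" where
  "basis_add n p k h = restrict (\<lambda>i. (k i + h i) mod p) {..<n}"

lemma basis_add_in_basis_set: "p > 0 \<Longrightarrow> basis_add n p k h \<in> basis_set n p"
  unfolding basis_set_def basis_add_def by auto

lemma basis_set_less: "k \<in> basis_set n p \<Longrightarrow> i < n \<Longrightarrow> k i < p"
  unfolding basis_set_def by auto

lemma basis_set_undefined: "k \<in> basis_set n p \<Longrightarrow> \<not> i < n \<Longrightarrow> k i = undefined"
  unfolding basis_set_def using PiE_arb[of k "{..<n}" "\<lambda>_. {..<p}" i] by simp

lemma inj_on_basis_add:
  assumes "p > 0"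
  shows "inj_on (basis_add n p k) (basis_set n p)"
proof (rule inj_onI)
  fix h h' assume h: "h \<in> basis_set n p" and h': "h' \<in> basis_set n p"
    and eq: "basis_add n p k h = basis_add n p k h'"
  show "h = h'"
  proof
    fix i show "h i = h' i"
    proof (cases "i < n")
      case True
      have "(k i + h i) mod p = (k i + h' i) mod p"
        using fun_cong[OF eq, of i] True by (simp add: basis_add_def)
      hence "[k i + h i = k i + h' i] (mod p)" by (simp only: cong_def)
      hence "[h i = h' i] (mod p)" by (simp only: cong_add_lcancel_nat)
      thus ?thesis using basis_set_less[OF h True] basis_set_less[OF h' True] by (simp add: cong_def)
    next
      case False
      thus ?thesis using basis_set_undefined[OF h False] basis_set_undefined[OF h' False] by simp
    qed
  qed
qed

lemma bij_betw_basis_add: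
  assumes "p > 0"
  shows "bij_betw (basis_add n p k) (basis_set n p) (basis_set n p)"
proof -
  have "basis_add n p k ` basis_set n p \<subseteq> basis_set n p"
    using assms by (auto simp: basis_add_in_basis_set)
  hence "basis_add n p k ` basis_set n p = basis_set n p"
    using assms by (intro endo_inj_surj finite_basis_set inj_on_basis_add)
  thus ?thesis using assms by (intro bij_betw_imageI inj_on_basis_add)
qed

lemma omega_power_mult_mod:
  assumes "p > 0"
  shows "omega p ^ ((a + b) mod p * ((c + d) mod p))
    = omega p ^ (a * c) * omega p ^ (b * d) * omega p ^ (a * d + b * c)"
proof -
  have "[(a + b) mod p * ((c + d) mod p) = (a + b) * (c + d)] (mod p)"
    by (intro cong_mult) (simp_all add: cong_def)
  hence "[(a + b) mod p * ((c + d) mod p) = a * c + b * d + (a * d + b * c)] (mod p)"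
    by (simp add: algebra_simps)
  from omega_power_cong[OF assms this] show ?thesis by (simp add: power_add)
qed

lemma U_gate_basis_add:
  assumes p: "prime p" and k: "k \<in> basis_set n p" and h: "h \<in> basis_set n p"
    and "i < n" and "j < n"
  shows "U_gate p i j (basis_add n p k h) = U_gate p i j k * U_gate p i j h *
     omega p ^ (if i = j then k i * h i else k i * h j + h i * k j)"
proof (cases "i = j")
  case True
  thus ?thesis using phase_gate_add_mod[OF p basis_set_less[OF k] basis_set_less[OF h]] assms
    by (simp add: U_gate_def basis_add_def)
next
  case False
  thus ?thesis using omega_power_mult_mod[OF prime_gt_0_nat[OF p], of "k i" "h i" "k j" "h j"] assms
    by (simp add: U_gate_def basis_add_def)
qed

lemma sum_upper_triangle_symmetric:
  fixes a :: "nat \<Rightarrow> nat \<Rightarrow> 'a :: comm_semiring_1" and k h :: "nat \<Rightarrow> 'a"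
  assumes "\<And>i j. i < n \<Longrightarrow> j < n \<Longrightarrow> a i j = a j i"
  shows "(\<Sum>i<n. \<Sum>j\<in>{i..<n}. (if i = j then k i * h i else k i * h j + h i * k j) * a i j)
       = (\<Sum>i<n. \<Sum>j<n. a i j * k i * h j)"
  using assms
proof (induction n)
  case (Suc m)
  define F where "F i j = (if i = j then k i * h i else k i * h j + h i * k j) * a i j" for i j
  define G where "G i j = a i j * k i * h j" for i j
  have IH: "(\<Sum>i<m. \<Sum>j\<in>{i..<m}. F i j) = (\<Sum>i<m. \<Sum>j<m. G i j)"
    using Suc unfolding F_def G_def by simp
  have F_last: "F i m = G i m + G m i" if "i < m" for i
    using that Suc.prems[of i m] unfolding F_def G_def by (simp add: algebra_simps)
  have "(\<Sum>i<Suc m. \<Sum>j\<in>{i..<Suc m}. F i j) = (\<Sum>i<m. \<Sum>j\<in>{i..<Suc m}. F i j) + F m m"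
    by simp
  also have "(\<Sum>i<m. \<Sum>j\<in>{i..<Suc m}. F i j) = (\<Sum>i<m. (\<Sum>j\<in>{i..<m}. F i j) + (G i m + G m i))"
    using F_last by (intro sum.cong refl) simp
  also have "\<dots> = (\<Sum>i<m. \<Sum>j<m. G i j) + (\<Sum>i<m. G i m) + (\<Sum>i<m. G m i)"
    by (simp only: sum.distrib IH add.assoc)
  also have "\<dots> + F m m = (\<Sum>i<Suc m. \<Sum>j<Suc m. G i j)"
    by (simp add: sum.distrib F_def G_def algebra_simps)
  finally show ?case unfolding F_def G_def .
qed simp

definition graph_phase :: "nat \<Rightarrow> nat \<Rightarrow> int mat \<Rightarrow> (nat \<Rightarrow> nat) \<Rightarrow> complex" where
  "graph_phase n p A k = (\<Prod>i<n. \<Prod>j\<in>{i..<n}. U_gate p i j k ^ nat (A $$ (i, j)))"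

definition bilinear_form :: "nat \<Rightarrow> int mat \<Rightarrow> (nat \<Rightarrow> nat) \<Rightarrow> (nat \<Rightarrow> nat) \<Rightarrow> int" where
  "bilinear_form n A k h = (\<Sum>i<n. \<Sum>j<n. A $$ (i, j) * int (k i) * int (h j))"

lemma graph_phase_basis_add:
  assumes p: "prime p" and k: "k \<in> basis_set n p" and h: "h \<in> basis_set n p"
    and sym: "\<forall>i<n. \<forall>j<n. A $$ (i, j) = A $$ (j, i)"
    and nonneg: "\<forall>i<n. \<forall>j<n. 0 \<le> A $$ (i, j)"
  shows "graph_phase n p A (basis_add n p k h)
       = graph_phase n p A k * graph_phase n p A h * omega p powi bilinear_form n A k h"
proof -
  define a where "a i j = nat (A $$ (i, j))" for i j
  define e where "e i j = (if i = j then k i * h i else k i * h j + h i * k j)" for i j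
  have "graph_phase n p A (basis_add n p k h) = (\<Prod>i<n. \<Prod>j\<in>{i..<n}.
      (U_gate p i j k ^ a i j * U_gate p i j h ^ a i j) * omega p ^ (e i j * a i j))"
    unfolding graph_phase_def
  proof (intro prod.cong refl)
    fix i j assume "i \<in> {..<n}" "j \<in> {i..<n}"
    hence "U_gate p i j (basis_add n p k h) = U_gate p i j k * U_gate p i j h * omega p ^ e i j"
      unfolding e_def by (intro U_gate_basis_add[OF p k h]) auto
    thus "U_gate p i j (basis_add n p k h) ^ nat (A $$ (i, j))
        = (U_gate p i j k ^ a i j * U_gate p i j h ^ a i j) * omega p ^ (e i j * a i j)"
      unfolding a_def by (simp only: power_mult_distrib power_mult)
  qed
  also have "\<dots> = graph_phase n p A k * graph_phase n p A h
      * omega p ^ (\<Sum>i<n. \<Sum>j\<in>{i..<n}. e i j * a i j)"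
    unfolding graph_phase_def a_def power_sum prod.distrib ..
  also have "(\<Sum>i<n. \<Sum>j\<in>{i..<n}. e i j * a i j) = (\<Sum>i<n. \<Sum>j<n. a i j * k i * h j)"
    unfolding e_def using sym by (intro sum_upper_triangle_symmetric) (simp add: a_def)
  also have "\<dots> = nat (bilinear_form n A k h)"
  proof -
    have "int (\<Sum>i<n. \<Sum>j<n. a i j * k i * h j) = bilinear_form n A k h"
      unfolding bilinear_form_def of_nat_sum a_def using nonneg by (intro sum.cong refl) simp
    thus ?thesis by linarith
  qed
  also have "omega p ^ nat (bilinear_form n A k h) = omega p powi bilinear_form n A k h"
    unfolding bilinear_form_def using nonneg
    by (intro power_int_nonneg_exp[symmetric] sum_nonneg) (simp add: zero_le_mult_iff)
  finally show ?thesis .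
qed

lemma Z_string_basis_add:
  assumes "p > 0"
  shows "Z_string n p m (basis_add n p k h) = Z_string n p m k * Z_string n p m h"
proof -
  have "omega p ^ (m i * ((k i + h i) mod p)) = omega p ^ (m i * k i) * omega p ^ (m i * h i)" for i
  proof -
    have "[m i * ((k i + h i) mod p) = m i * k i + m i * h i] (mod p)"
      by (metis add_mult_distrib2 cong_mod_left cong_mult cong_refl)
    from omega_power_cong[OF assms this] show ?thesis by (simp add: power_add)
  qed
  thus ?thesis unfolding Z_string_def basis_add_def prod.distrib[symmetric] by simp
qed

lemma norm_U_gate [simp]: "cmod (U_gate p i j k) = 1"
  unfolding U_gate_def phase_gate_def by (simp add: norm_power)

lemma norm_graph_phase [simp]: "cmod (graph_phase n p A k) = 1"
  unfolding graph_phase_def prod_norm[symmetric] by (simp add: norm_power)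

lemma norm_Z_string [simp]: "cmod (Z_string n p m k) = 1"
  unfolding Z_string_def prod_norm[symmetric] by (simp add: norm_power)

lemma graph_phase_basis_zero [simp]: "graph_phase n p A (basis_zero n) = 1"
  unfolding graph_phase_def basis_zero_def U_gate_def phase_gate_def
  by (intro prod.neutral ballI) auto

lemma Z_string_basis_zero [simp]: "Z_string n p m (basis_zero n) = 1"
  unfolding Z_string_def basis_zero_def by simp

lemma omega_powi_sum: "omega p powi (\<Sum>i\<in>I. f i) = (\<Prod>i\<in>I. omega p powi f i)"
  by (induction I rule: infinite_finite_induct) (simp_all add: omega_powi_add)

lemma sum_basis_set_omega_powi:
  assumes "p > 0"
  shows "(\<Sum>k\<in>basis_set n p. omega p powi (\<Sum>i<n. int (k i) * c i))
       = (if \<forall>i<n. int p dvd c i then of_nat p ^ n else 0)"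
proof -
  have "(\<Sum>k\<in>basis_set n p. omega p powi (\<Sum>i<n. int (k i) * c i))
      = (\<Sum>k\<in>basis_set n p. \<Prod>i<n. omega p powi (int (k i) * c i))"
    by (simp only: omega_powi_sum)
  also have "\<dots> = (\<Prod>i<n. \<Sum>x<p. omega p powi (int x * c i))"
    unfolding basis_set_def by (rule prod_sum_PiE[symmetric]) auto
  also have "\<dots> = (\<Prod>i<n. if int p dvd c i then of_nat p else 0)"
    using assms by (simp only: sum_omega_powi_mult)
  also have "\<dots> = (if \<forall>i<n. int p dvd c i then of_nat p ^ n else 0)"
    by auto
  finally show ?thesis .
qed

lemma prime_dvd_mult_mat_vec_imp_dvd:
  fixes M :: "int mat" and p :: int
  assumes "prime p" and M: "M \<in> carrier_mat n n" and v: "v \<in> carrier_vec n"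
    and det: "\<not> p dvd det M" and Mv: "\<forall>i<n. p dvd (M *\<^sub>v v) $ i" and j: "j < n"
  shows "p dvd v $ j"
proof -
  have "det M * v $ j = (adj_mat M *\<^sub>v (M *\<^sub>v v)) $ j"
  proof -
    have "adj_mat M *\<^sub>v (M *\<^sub>v v) = (adj_mat M * M) *\<^sub>v v"
      using adj_mat(1)[OF M] M v by (simp add: assoc_mult_mat_vec)
    also have "\<dots> = det M \<cdot>\<^sub>v v"
      using M v by (auto simp: adj_mat(3))
    finally show ?thesis using v j by simp
  qed
  also have "\<dots> = (\<Sum>l<n. row (adj_mat M) j $ l * (M *\<^sub>v v) $ l)"
    using adj_mat(1)[OF M] M j by (simp add: scalar_prod_def lessThan_atLeast0)
  also have "p dvd \<dots>"
    using Mv by (auto intro: dvd_sum dvd_mult)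
  finally show ?thesis using \<open>prime p\<close> det by (simp add: prime_dvd_mult_iff)
qed

lemma bilinear_form_diff:
  assumes "A \<in> carrier_mat n n" and "B \<in> carrier_mat n n"
  shows "bilinear_form n (A - B) k h = bilinear_form n A k h - bilinear_form n B k h"
  unfolding bilinear_form_def sum_subtractf[symmetric] using assms
  by (intro sum.cong refl) (simp add: algebra_simps)

lemma bilinear_form_eq_mult_mat_vec:
  assumes "M \<in> carrier_mat n n"
  shows "bilinear_form n M k h = (\<Sum>i<n. int (k i) * (M *\<^sub>v vec n (\<lambda>j. int (h j))) $ i)"
  unfolding bilinear_form_def using assms
  by (intro sum.cong refl) (simp add: scalar_prod_def sum_distrib_left lessThan_atLeast0 mult_ac)

lemma sum_basis_set_omega_bilinear_form:
  assumes p: "prime p" and M: "M \<in> carrier_mat n n" and det: "\<not> int p dvd det M"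
    and h: "h \<in> basis_set n p"
  shows "(\<Sum>k\<in>basis_set n p. omega p powi (- bilinear_form n M k h))
       = (if h = basis_zero n then of_nat p ^ n else 0)"
proof -
  define v where "v = vec n (\<lambda>j. int (h j))"
  define c where "c i = - (M *\<^sub>v v) $ i" for i
  have "(\<forall>i<n. int p dvd c i) \<longleftrightarrow> h = basis_zero n"
  proof
    assume dvd: "\<forall>i<n. int p dvd c i"
    have "h j = 0" if "j < n" for j
    proof -
      have "int p dvd v $ j"
        using dvd that p M det unfolding c_def v_def
        by (intro prime_dvd_mult_mat_vec_imp_dvd[of "int p" M n]) auto
      hence "p dvd h j" using that unfolding v_def by simp
      thus ?thesis using basis_set_less[OF h that] by (auto elim: dvdE)
    qed
    thus "h = basis_zero n"
      using basis_set_undefined[OF h] unfolding basis_zero_def by (auto simp: fun_eq_iff)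
  next
    assume "h = basis_zero n"
    hence "v = 0\<^sub>v n" unfolding v_def basis_zero_def by auto
    thus "\<forall>i<n. int p dvd c i" using M unfolding c_def by simp
  qed
  moreover have "- bilinear_form n M k h = (\<Sum>i<n. int (k i) * c i)" for k
    unfolding bilinear_form_eq_mult_mat_vec[OF M] v_def c_def by (simp add: sum_negf)
  ultimately show ?thesis
    by (simp only: sum_basis_set_omega_powi[OF prime_gt_0_nat[OF p]])
qed

lemma cnj_sum_mult_sum_twisted:
  fixes g :: "'a \<Rightarrow> complex" and W :: "'a \<Rightarrow> 'a \<Rightarrow> complex"
  assumes "finite B" and "z \<in> B" and "g z = 1"
    and bij: "\<And>k. k \<in> B \<Longrightarrow> bij_betw (shift k) B B"
    and unit: "\<And>k. k \<in> B \<Longrightarrow> cmod (g k) = 1"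
    and twist: "\<And>k h. k \<in> B \<Longrightarrow> h \<in> B \<Longrightarrow> g (shift k h) = g k * g h * W k h"
    and orth: "\<And>h. h \<in> B \<Longrightarrow> (\<Sum>k\<in>B. W k h) = (if h = z then N else 0)"
  shows "cnj (\<Sum>k\<in>B. g k) * (\<Sum>k\<in>B. g k) = N"
proof -
  have "cnj (\<Sum>k\<in>B. g k) * (\<Sum>k\<in>B. g k) = (\<Sum>k\<in>B. \<Sum>k'\<in>B. cnj (g k) * g k')"
    by (simp add: cnj_sum sum_product)
  also have "\<dots> = (\<Sum>k\<in>B. \<Sum>h\<in>B. cnj (g k) * g (shift k h))"
  proof (rule sum.cong[OF refl])
    fix k assume "k \<in> B"
    show "(\<Sum>k'\<in>B. cnj (g k) * g k') = (\<Sum>h\<in>B. cnj (g k) * g (shift k h))"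
      using sum.reindex_bij_betw[OF bij[OF \<open>k \<in> B\<close>], of "\<lambda>k'. cnj (g k) * g k'"] by simp
  qed
  also have "\<dots> = (\<Sum>k\<in>B. \<Sum>h\<in>B. g h * W k h)"
  proof (intro sum.cong refl)
    fix k h assume "k \<in> B" "h \<in> B"
    moreover have "cnj (g k) * g k = 1"
      using unit[OF \<open>k \<in> B\<close>] by (simp add: complex_norm_square[symmetric] mult.commute)
    ultimately show "cnj (g k) * g (shift k h) = g h * W k h"
      using twist by (simp add: mult.assoc[symmetric])
  qed
  also have "\<dots> = (\<Sum>h\<in>B. g h * (\<Sum>k\<in>B. W k h))"
    by (subst sum.swap) (simp add: sum_distrib_left)
  also have "\<dots> = (\<Sum>h\<in>B. if h = z then N else 0)"
    using orth \<open>g z = 1\<close> by (intro sum.cong refl) simp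
  also have "\<dots> = N"
    using \<open>finite B\<close> \<open>z \<in> B\<close> by simp
  finally show ?thesis .
qed

definition overlap_phase ::
    "nat \<Rightarrow> nat \<Rightarrow> int mat \<Rightarrow> int mat \<Rightarrow> (nat \<Rightarrow> nat) \<Rightarrow> (nat \<Rightarrow> nat) \<Rightarrow> (nat \<Rightarrow> nat) \<Rightarrow> complex" where
  "overlap_phase n p A A' m m' k =
     cnj (Z_string n p m k * graph_phase n p A k) * (Z_string n p m' k * graph_phase n p A' k)"

lemma inner_prod_graph_basis_state:
  "inner_prod n p (graph_basis_state n p A m) (graph_basis_state n p A' m')
     = (\<Sum>k\<in>basis_set n p. overlap_phase n p A A' m m' k) / of_nat p ^ n"
  unfolding inner_prod_def sum_divide_distrib
proof (rule sum.cong[OF refl])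
  fix k assume k: "k \<in> basis_set n p"
  define c where "c = 1 / complex_of_real (sqrt (real p)) ^ n"
  have c: "cnj c * c = 1 / of_nat p ^ n"
    unfolding c_def by (simp add: power_mult_distrib[symmetric] flip: of_real_mult)
  have "graph_basis_state n p B \<mu> k = Z_string n p \<mu> k * graph_phase n p B k * c" for B \<mu>
    using k unfolding graph_basis_state_def graph_state_def apply_diag_def plus_state_def
      graph_phase_def c_def by simp
  hence "cnj (graph_basis_state n p A m k) * graph_basis_state n p A' m' k
      = overlap_phase n p A A' m m' k * (cnj c * c)"
    unfolding overlap_phase_def by (simp only: complex_cnj_mult mult_ac)
  thus "cnj (graph_basis_state n p A m k) * graph_basis_state n p A' m' k
      = overlap_phase n p A A' m m' k / of_nat p ^ n"
    unfolding c by simp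
qed

lemma overlap_phase_basis_add:
  assumes p: "prime p" and k: "k \<in> basis_set n p" and h: "h \<in> basis_set n p"
    and A: "A \<in> carrier_mat n n" and A': "A' \<in> carrier_mat n n"
    and sym: "\<forall>i<n. \<forall>j<n. A $$ (i, j) = A $$ (j, i) \<and> A' $$ (i, j) = A' $$ (j, i)"
    and nonneg: "\<forall>i<n. \<forall>j<n. 0 \<le> A $$ (i, j) \<and> 0 \<le> A' $$ (i, j)"
  shows "overlap_phase n p A A' m m' (basis_add n p k h)
       = overlap_phase n p A A' m m' k * overlap_phase n p A A' m m' h
         * omega p powi (- bilinear_form n (A - A') k h)"
proof -
  have p0: "p > 0" using p by (rule prime_gt_0_nat)
  have "cnj (omega p powi bilinear_form n A k h) * omega p powi bilinear_form n A' k h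
      = omega p powi (- bilinear_form n (A - A') k h)"
    unfolding cnj_omega_powi omega_powi_add[symmetric] bilinear_form_diff[OF A A'] by simp
  moreover have "graph_phase n p B (basis_add n p k h)
      = graph_phase n p B k * graph_phase n p B h * omega p powi bilinear_form n B k h"
    if "B = A \<or> B = A'" for B
    using that sym nonneg by (intro graph_phase_basis_add[OF p k h]) auto
  ultimately show ?thesis
    unfolding overlap_phase_def Z_string_basis_add[OF p0]
    by (simp only: complex_cnj_mult mult_ac simp_thms)
qed

lemma cnj_sum_overlap_phase_mult:
  assumes p: "prime p" and A: "A \<in> carrier_mat n n" and A': "A' \<in> carrier_mat n n"
    and sym: "\<forall>i<n. \<forall>j<n. A $$ (i, j) = A $$ (j, i) \<and> A' $$ (i, j) = A' $$ (j, i)"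
    and nonneg: "\<forall>i<n. \<forall>j<n. 0 \<le> A $$ (i, j) \<and> 0 \<le> A' $$ (i, j)"
    and det: "\<not> int p dvd det (A - A')"
  shows "cnj (\<Sum>k\<in>basis_set n p. overlap_phase n p A A' m m' k)
         * (\<Sum>k\<in>basis_set n p. overlap_phase n p A A' m m' k) = of_nat p ^ n"
proof -
  have p0: "p > 0" using p by (rule prime_gt_0_nat)
  show ?thesis
  proof (rule cnj_sum_mult_sum_twisted)
    show "finite (basis_set n p)" by (rule finite_basis_set)
    show "basis_zero n \<in> basis_set n p" using p0 by (rule basis_zero_in_basis_set)
    show "overlap_phase n p A A' m m' (basis_zero n) = 1"
      by (simp add: overlap_phase_def)
    show "bij_betw (basis_add n p k) (basis_set n p) (basis_set n p)" for k
      using p0 by (rule bij_betw_basis_add)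
    show "cmod (overlap_phase n p A A' m m' k) = 1" for k
      by (simp add: overlap_phase_def norm_mult)
    show "overlap_phase n p A A' m m' (basis_add n p k h)
        = overlap_phase n p A A' m m' k * overlap_phase n p A A' m m' h
          * omega p powi (- bilinear_form n (A - A') k h)"
      if "k \<in> basis_set n p" "h \<in> basis_set n p" for k h
      using overlap_phase_basis_add[OF p that A A' sym nonneg] .
    show "(\<Sum>k\<in>basis_set n p. omega p powi (- bilinear_form n (A - A') k h))
        = (if h = basis_zero n then of_nat p ^ n else 0)" if "h \<in> basis_set n p" for h
      using A A' det that by (intro sum_basis_set_omega_bilinear_form[OF p]) auto
  qed
qed

theorem lemma1:
  fixes p n :: nat and Ar As :: "int mat"
  assumes "prime p" and "n \<ge> 1"
    and "Ar \<in> carrier_mat n n" and "As \<in> carrier_mat n n"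
    and "\<forall>i<n. \<forall>j<n. Ar $$ (i, j) \<in> {0..<int p} \<and> As $$ (i, j) \<in> {0..<int p}"
    and "\<forall>i<n. \<forall>j<n. Ar $$ (i, j) = Ar $$ (j, i) \<and> As $$ (i, j) = As $$ (j, i)"
    and "\<not> int p dvd det (Ar - As)"
  shows "\<forall>m\<in>basis_set n p. \<forall>m'\<in>basis_set n p.
           (cmod (inner_prod n p (graph_basis_state n p Ar m) (graph_basis_state n p As m')))\<^sup>2
             = 1 / real p ^ n"
proof (intro ballI)
  fix m m'
  define S where "S = (\<Sum>k\<in>basis_set n p. overlap_phase n p Ar As m m' k)"
  have "cnj S * S = of_nat p ^ n"
    unfolding S_def using assms(5)
    by (intro cnj_sum_overlap_phase_mult assms(1,3,4,6,7)) auto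
  hence "(cmod S)\<^sup>2 = real p ^ n"
    by (metis complex_norm_square mult.commute of_nat_power of_real_eq_iff of_real_of_nat_eq of_real_power)
  moreover have "p > 0" using assms(1) by (rule prime_gt_0_nat)
  ultimately show "(cmod (inner_prod n p (graph_basis_state n p Ar m) (graph_basis_state n p As m')))\<^sup>2
      = 1 / real p ^ n"
    unfolding inner_prod_graph_basis_state S_def[symmetric]
    by (simp add: norm_divide norm_power power_divide power2_eq_square)
qed

end
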